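(* Let $k$ be a field, $G$ an ordered abelian group, $K=k((G))$ with canonical valuation $v$, and $D$ a derivation on $K$ whose field of constants is $k$, such that $v$ is a differential valuation with respect to $D$. Let $S\subseteq K$ be the additive subgroup of power series without constant term (i.e. $c_0=0$). If $(K,D)$ admits asymptotic integration, then for every $b\in K$ there is a unique $s\in S$ with $Ds=b$; that is, $D|_S:S\to K$ is a bijective additive map.
   Context: For a field $k$ and ordered abelian group $G$, $k((G))$ is the field of formal sums $a=\sum_{g\in G}c_gt^g$ with $c_g\in k$ and well-ordered support $\mathrm{supp}(a)=\{g\mid c_g\neq0\}$; its canonical valuation is $va=\min\mathrm{supp}(a)$, $v0=\infty$. A derivation $D$ on a field $K$ is an additive map with $D(ab)=aDb+bDa$; its field of constants is $C=\{a\in K\mid Da=0\}$. A valuation $v$ of $K$ is a differential valuation (for $D$) if $v$ is trivial on $C$ and for all $a,b\in K$ with $va\ge0$, $vb>0$, $b\ne0$ one has $v\!\left(\frac{b\,Da}{Db}\right)>0$. $(K,D)$ admits asymptotic integration if for every $b\in K\setminus\{0\}$ there is $a\in K$ with $v(b-Da)>vb$. *)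

theory Defs
  imports Main
begin

text \<open>Hahn series k((G)): functions G \<Rightarrow> k with well-ordered support.
  'g is an ordered abelian group, 'k a field.\<close>

definition hsupp :: "('g::linordered_ab_group_add \<Rightarrow> 'k::field) \<Rightarrow> 'g set" where
  "hsupp a = {g. a g \<noteq> 0}"

definition well_ordered_set :: "'g::linorder set \<Rightarrow> bool" where
  "well_ordered_set A \<longleftrightarrow> (\<forall>B \<subseteq> A. B \<noteq> {} \<longrightarrow> (\<exists>m\<in>B. \<forall>x\<in>B. m \<le> x))"

definition hahn :: "('g::linordered_ab_group_add \<Rightarrow> 'k::field) set" where
  "hahn = {a. well_ordered_set (hsupp a)}"

definition hzero :: "'g::linordered_ab_group_add \<Rightarrow> 'k::field" where
  "hzero = (\<lambda>g. 0)"

definition hadd :: "('g::linordered_ab_group_add \<Rightarrow> 'k::field) \<Rightarrow> ('g \<Rightarrow> 'k) \<Rightarrow> ('g \<Rightarrow> 'k)" where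
  "hadd a b = (\<lambda>g. a g + b g)"

definition hminus :: "('g::linordered_ab_group_add \<Rightarrow> 'k::field) \<Rightarrow> ('g \<Rightarrow> 'k) \<Rightarrow> ('g \<Rightarrow> 'k)" where
  "hminus a b = (\<lambda>g. a g - b g)"

text \<open>Cauchy product; the index set is finite for well-ordered supports.\<close>
definition hmul :: "('g::linordered_ab_group_add \<Rightarrow> 'k::field) \<Rightarrow> ('g \<Rightarrow> 'k) \<Rightarrow> ('g \<Rightarrow> 'k)" where
  "hmul a b = (\<lambda>g. \<Sum>h\<in>{h. a h \<noteq> 0 \<and> b (g - h) \<noteq> 0}. a h * b (g - h))"

text \<open>Field division in k((G)) (for y \<noteq> 0).\<close>
definition hdiv :: "('g::linordered_ab_group_add \<Rightarrow> 'k::field) \<Rightarrow> ('g \<Rightarrow> 'k) \<Rightarrow> ('g \<Rightarrow> 'k)" where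
  "hdiv x y = (THE z. z \<in> hahn \<and> hmul z y = x)"

definition hconst :: "'k::field \<Rightarrow> ('g::linordered_ab_group_add \<Rightarrow> 'k)" where
  "hconst c = (\<lambda>g. if g = 0 then c else 0)"

text \<open>Canonical valuation v a = min supp a, for a \<noteq> 0 (v 0 = \<infinity> handled by predicates below).\<close>
definition hval :: "('g::linordered_ab_group_add \<Rightarrow> 'k::field) \<Rightarrow> 'g" where
  "hval a = (LEAST g. a g \<noteq> 0)"

text \<open>v a > v b (with v 0 = \<infinity>)\<close>
definition vgt :: "('g::linordered_ab_group_add \<Rightarrow> 'k::field) \<Rightarrow> ('g \<Rightarrow> 'k) \<Rightarrow> bool" where
  "vgt a b \<longleftrightarrow> b \<noteq> hzero \<and> (a = hzero \<or> hval b < hval a)"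

definition vpos :: "('g::linordered_ab_group_add \<Rightarrow> 'k::field) \<Rightarrow> bool" where
  "vpos a \<longleftrightarrow> a = hzero \<or> 0 < hval a"

definition vnonneg :: "('g::linordered_ab_group_add \<Rightarrow> 'k::field) \<Rightarrow> bool" where
  "vnonneg a \<longleftrightarrow> a = hzero \<or> 0 \<le> hval a"

definition is_derivation :: "(('g::linordered_ab_group_add \<Rightarrow> 'k::field) \<Rightarrow> ('g \<Rightarrow> 'k)) \<Rightarrow> bool" where
  "is_derivation D \<longleftrightarrow> (\<forall>a\<in>hahn. D a \<in> hahn) \<and>
     (\<forall>a\<in>hahn. \<forall>b\<in>hahn. D (hadd a b) = hadd (D a) (D b)) \<and>
     (\<forall>a\<in>hahn. \<forall>b\<in>hahn. D (hmul a b) = hadd (hmul a (D b)) (hmul b (D a)))"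

definition constants :: "(('g::linordered_ab_group_add \<Rightarrow> 'k::field) \<Rightarrow> ('g \<Rightarrow> 'k)) \<Rightarrow> ('g \<Rightarrow> 'k) set" where
  "constants D = {a \<in> hahn. D a = hzero}"

definition differential_valuation :: "(('g::linordered_ab_group_add \<Rightarrow> 'k::field) \<Rightarrow> ('g \<Rightarrow> 'k)) \<Rightarrow> bool" where
  "differential_valuation D \<longleftrightarrow>
     (\<forall>c\<in>constants D. c \<noteq> hzero \<longrightarrow> hval c = 0) \<and>
     (\<forall>a\<in>hahn. \<forall>b\<in>hahn. vnonneg a \<longrightarrow> b \<noteq> hzero \<longrightarrow> vpos b \<longrightarrow>
        vpos (hdiv (hmul b (D a)) (D b)))"

definition asymptotic_integration :: "(('g::linordered_ab_group_add \<Rightarrow> 'k::field) \<Rightarrow> ('g \<Rightarrow> 'k)) \<Rightarrow> bool" where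
  "asymptotic_integration D \<longleftrightarrow>
     (\<forall>b\<in>hahn. b \<noteq> hzero \<longrightarrow> (\<exists>a\<in>hahn. vgt (hminus b (D a)) b))"

end

theory Submission
  imports Defs
begin

text \<open>
  Right multiplication by a nonzero series, and \<open>D\<close> restricted to the series without constant
  term, are additive maps \<open>L\<close> such that \<open>v x < v y\<close> implies \<open>v (L x) < v (L y)\<close> and
  \<open>v x = v y\<close> implies \<open>v (L x) = v (L y)\<close>. For \<open>D\<close> this is where the differential valuation
  enters, through \<open>D (w x) = w D x + x D w\<close> with \<open>v w > 0\<close>. For such a map every \<open>b\<close> whose
  residuals \<open>b - L z\<close> can always be pushed to higher valuation is attained: by Zorn's lemma
  some approximation \<open>z\<close> has a residual of maximal valuation, because a chain of ever better
  approximations converges coefficientwise to a pseudo-limit better than all of them.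
  Leading-term division supplies the improvements for multiplication (so \<open>k((G))\<close> is a
  field), asymptotic integration supplies them for \<open>D\<close>. Injectivity holds because the
  kernel of \<open>D\<close> consists of the constants.
\<close>

lemma well_ordered_setE:
  assumes "well_ordered_set A" "B \<subseteq> A" "B \<noteq> {}"
  obtains m where "m \<in> B" "\<And>x. x \<in> B \<Longrightarrow> m \<le> x"
  using assms(1)[unfolded well_ordered_set_def, rule_format, OF assms(2,3)] by blast

lemma well_ordered_set_iff_wf:
  "well_ordered_set A \<longleftrightarrow> wf {(x, y). x \<in> A \<and> y \<in> A \<and> x < y}" (is "_ \<longleftrightarrow> wf ?r")
proof
  assume wo: "well_ordered_set A"
  show "wf ?r"
  proof (rule wfI_min)
    fix x :: 'a and Q assume "x \<in> Q"
    show "\<exists>z\<in>Q. \<forall>y. (y, z) \<in> ?r \<longrightarrow> y \<notin> Q"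
    proof (cases "Q \<inter> A = {}")
      case True
      then show ?thesis using \<open>x \<in> Q\<close> by blast
    next
      case False
      then obtain m where "m \<in> Q \<inter> A" "\<And>y. y \<in> Q \<inter> A \<Longrightarrow> m \<le> y"
        using well_ordered_setE[OF wo Int_lower2 False] by blast
      then show ?thesis by (auto simp: not_less[symmetric])
    qed
  qed
next
  assume "wf ?r"
  show "well_ordered_set A" unfolding well_ordered_set_def
  proof (intro allI impI)
    fix B assume "B \<subseteq> A" "B \<noteq> {}"
    then obtain m where "m \<in> B" "\<And>y. (y, m) \<in> ?r \<Longrightarrow> y \<notin> B"
      using wfE_min[OF \<open>wf ?r\<close>] by blast
    then show "\<exists>m\<in>B. \<forall>x\<in>B. m \<le> x" using \<open>B \<subseteq> A\<close> by (auto simp: not_less[symmetric])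
  qed
qed

lemma well_ordered_set_iff_no_descending_chain:
  "well_ordered_set A \<longleftrightarrow> (\<nexists>f. \<forall>n. f n \<in> A \<and> f (Suc n) < f n)"
  unfolding well_ordered_set_iff_wf wf_iff_no_infinite_down_chain by auto

lemma well_ordered_subset: "well_ordered_set A \<Longrightarrow> B \<subseteq> A \<Longrightarrow> well_ordered_set B"
  unfolding well_ordered_set_def by (meson subset_trans)

lemma well_ordered_Un:
  assumes A: "well_ordered_set A" and B: "well_ordered_set B"
  shows "well_ordered_set (A \<union> B)"
  unfolding well_ordered_set_def
proof (intro allI impI)
  fix C assume C: "C \<subseteq> A \<union> B" "C \<noteq> {}"
  show "\<exists>m\<in>C. \<forall>x\<in>C. m \<le> x"
  proof (cases "C \<inter> A = {}")
    case True
    then have "C \<subseteq> B" using C(1) by blast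
    then show ?thesis using well_ordered_setE[OF B _ C(2)] by metis
  next
    case False
    obtain a where a: "a \<in> C \<inter> A" "\<And>x. x \<in> C \<inter> A \<Longrightarrow> a \<le> x"
      using well_ordered_setE[OF A Int_lower2 False] by blast
    show ?thesis
    proof (cases "C \<inter> B = {}")
      case True
      then show ?thesis using a C(1) by blast
    next
      case False
      obtain b where b: "b \<in> C \<inter> B" "\<And>x. x \<in> C \<inter> B \<Longrightarrow> b \<le> x"
        using well_ordered_setE[OF B Int_lower2 False] by blast
      have "min a b \<le> x" if "x \<in> C" for x
        using that C(1) a(2) b(2) by (auto simp: min_le_iff_disj)
      moreover have "min a b \<in> C" using a(1) b(1) by (simp add: min_def)
      ultimately show ?thesis by blast
    qed
  qed
qed

lemma finite_imp_well_ordered: "finite (A::'a::linorder set) \<Longrightarrow> well_ordered_set A"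
  unfolding well_ordered_set_def by (metis Min_in Min_le finite_subset)

lemma well_ordered_nondecreasing_subseq:
  fixes a :: "nat \<Rightarrow> 'a::linorder"
  assumes "well_ordered_set A" "\<And>n. a n \<in> A"
  obtains \<sigma> where "strict_mono \<sigma>" "\<And>n. a (\<sigma> n) \<le> a (\<sigma> (Suc n))"
proof -
  have tail_min: "\<exists>i\<ge>k. \<forall>j\<ge>k. a i \<le> a j" for k
  proof -
    have "a ` {k..} \<subseteq> A" "a ` {k..} \<noteq> {}" using assms(2) by auto
    then obtain m where "m \<in> a ` {k..}" "\<And>x. x \<in> a ` {k..} \<Longrightarrow> m \<le> x"
      using well_ordered_setE[OF assms(1)] by metis
    then show ?thesis by auto
  qed
  have "\<exists>\<sigma>. \<forall>n. (\<forall>j\<ge>\<sigma> n. a (\<sigma> n) \<le> a j) \<and> \<sigma> n < \<sigma> (Suc n)"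
  proof (rule dependent_nat_choice)
    show "\<exists>i. \<forall>j\<ge>i. a i \<le> a j" using tail_min[of 0] by auto
  next
    fix i n
    obtain i' where "i' \<ge> Suc i" "\<forall>j\<ge>Suc i. a i' \<le> a j" using tail_min[of "Suc i"] by blast
    then show "\<exists>i'. (\<forall>j\<ge>i'. a i' \<le> a j) \<and> i < i'" by (intro exI[of _ i']) auto
  qed
  then obtain \<sigma> where "\<And>n. \<forall>j\<ge>\<sigma> n. a (\<sigma> n) \<le> a j" "\<And>n. \<sigma> n < \<sigma> (Suc n)" by blast
  then show ?thesis using that strict_mono_Suc_iff by (metis less_imp_le)
qed

lemma well_ordered_sumset:
  fixes A B :: "'g::linordered_ab_group_add set"
  assumes A: "well_ordered_set A" and B: "well_ordered_set B"
  shows "well_ordered_set {x + y | x y. x \<in> A \<and> y \<in> B}"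
  unfolding well_ordered_set_iff_no_descending_chain
proof
  assume "\<exists>f. \<forall>n. f n \<in> {x + y | x y. x \<in> A \<and> y \<in> B} \<and> f (Suc n) < f n"
  then obtain f where f: "\<And>n. f n \<in> {x + y | x y. x \<in> A \<and> y \<in> B}" "\<And>n. f (Suc n) < f n"
    by blast
  then have "\<forall>n. \<exists>x y. x \<in> A \<and> y \<in> B \<and> f n = x + y" by blast
  then obtain a b where ab: "\<And>n. a n \<in> A \<and> b n \<in> B \<and> f n = a n + b n" by metis
  obtain \<sigma> where \<sigma>: "strict_mono \<sigma>" "\<And>n. a (\<sigma> n) \<le> a (\<sigma> (Suc n))"
    using well_ordered_nondecreasing_subseq[OF A] ab by blast
  have "f (\<sigma> (Suc n)) < f (\<sigma> n)" for n
    using lift_Suc_mono_less[of "\<lambda>n. - f n"] f(2) \<sigma>(1) by (simp add: strict_mono_def)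
  then have "b (\<sigma> (Suc n)) < b (\<sigma> n)" for n
    using \<sigma>(2)[of n] ab by (metis add_mono not_le)
  then show False using B ab unfolding well_ordered_set_iff_no_descending_chain by fast
qed

lemma well_ordered_finite_fibre:
  fixes A B :: "'g::linordered_ab_group_add set"
  assumes A: "well_ordered_set A" and B: "well_ordered_set B"
  shows "finite {h \<in> A. g - h \<in> B}"
proof (rule ccontr)
  define H where "H = {h \<in> A. g - h \<in> B}"
  assume "infinite {h \<in> A. g - h \<in> B}"
  then have "infinite H" by (simp add: H_def)
  have least: "\<exists>m\<in>X. \<forall>x\<in>X. m \<le> x" if "X \<subseteq> H" "infinite X" for X
  proof -
    have "X \<subseteq> A" "X \<noteq> {}" using that by (auto simp: H_def)
    then obtain m where "m \<in> X" "\<And>x. x \<in> X \<Longrightarrow> m \<le> x" using well_ordered_setE[OF A] by metis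
    then show ?thesis by blast
  qed
  have "\<exists>f. \<forall>n. (f n \<in> H \<and> infinite {y \<in> H. f n < y}) \<and> f n < f (Suc n)"
  proof (rule dependent_nat_choice)
    obtain m where "m \<in> H" "\<forall>x\<in>H. m \<le> x" using least[OF _ \<open>infinite H\<close>] by blast
    moreover have "{y \<in> H. m < y} = H - {m}" using calculation by force
    ultimately show "\<exists>x. x \<in> H \<and> infinite {y \<in> H. x < y}" using \<open>infinite H\<close> by auto
  next
    fix x n assume "x \<in> H \<and> infinite {y \<in> H. x < y}"
    moreover obtain m where "m \<in> {y \<in> H. x < y}" "\<forall>z\<in>{y \<in> H. x < y}. m \<le> z"
      using least[of "{y \<in> H. x < y}"] calculation by blast
    moreover have "{y \<in> H. m < y} = {y \<in> H. x < y} - {m}" using calculation by force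
    ultimately show "\<exists>y. (y \<in> H \<and> infinite {z \<in> H. y < z}) \<and> x < y" by auto
  qed
  then obtain f where "\<And>n. f n \<in> H" "\<And>n. f n < f (Suc n)" by blast
  then have "\<forall>n. g - f n \<in> B \<and> g - f (Suc n) < g - f n"
    by (simp add: H_def diff_strict_left_mono)
  then show False using B unfolding well_ordered_set_iff_no_descending_chain by fast
qed

lemma in_hahn_iff: "a \<in> hahn \<longleftrightarrow> well_ordered_set {g. a g \<noteq> 0}"
  unfolding hahn_def hsupp_def by simp

lemma neq_hzero_iff: "a \<noteq> hzero \<longleftrightarrow> (\<exists>g. a g \<noteq> 0)"
  unfolding hzero_def by (auto simp: fun_eq_iff)

lemma hzero_apply [simp]: "hzero g = 0"
  unfolding hzero_def by simp

lemma hadd_apply [simp]: "hadd a b g = a g + b g"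
  unfolding hadd_def by simp

lemma hminus_apply [simp]: "hminus a b g = a g - b g"
  unfolding hminus_def by simp

lemma hzero_in_hahn [simp]: "hzero \<in> hahn"
  unfolding in_hahn_iff by (simp add: finite_imp_well_ordered)

lemma hadd_in_hahn: "a \<in> hahn \<Longrightarrow> b \<in> hahn \<Longrightarrow> hadd a b \<in> hahn"
  unfolding in_hahn_iff
  by (rule well_ordered_subset[OF well_ordered_Un], assumption, assumption) auto

lemma hminus_in_hahn: "a \<in> hahn \<Longrightarrow> b \<in> hahn \<Longrightarrow> hminus a b \<in> hahn"
  unfolding in_hahn_iff
  by (rule well_ordered_subset[OF well_ordered_Un], assumption, assumption) auto

definition hmonom :: "'g::linordered_ab_group_add \<Rightarrow> 'k::field \<Rightarrow> ('g \<Rightarrow> 'k)" where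
  "hmonom \<gamma> c = (\<lambda>g. if g = \<gamma> then c else 0)"

lemma hmonom_in_hahn: "hmonom \<gamma> c \<in> hahn"
proof -
  have "{g. hmonom \<gamma> c g \<noteq> 0} \<subseteq> {\<gamma>}" by (auto simp: hmonom_def)
  then show ?thesis unfolding in_hahn_iff
    by (meson finite.emptyI finite_insert finite_subset finite_imp_well_ordered)
qed

lemma hconst_eq_hmonom: "hconst c = hmonom 0 c"
  unfolding hconst_def hmonom_def by simp

lemma hconst_in_hahn: "hconst c \<in> hahn"
  unfolding hconst_eq_hmonom by (rule hmonom_in_hahn)

lemma hconst_0: "hconst 0 = hzero"
  unfolding hconst_def hzero_def by auto

lemma hval_eqI:
  assumes "a g \<noteq> 0" "\<And>h. h < g \<Longrightarrow> a h = 0"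
  shows "hval a = g"
  unfolding hval_def by (rule Least_equality) (use assms in \<open>force simp: not_less[symmetric]\<close>)+

lemma
  assumes "a \<in> hahn" "a \<noteq> hzero"
  shows hval_coeff_neq_0: "a (hval a) \<noteq> 0"
    and hval_le: "a g \<noteq> 0 \<Longrightarrow> hval a \<le> g"
proof -
  have wo: "well_ordered_set {g. a g \<noteq> 0}" and ne: "{g. a g \<noteq> 0} \<noteq> {}"
    using assms by (auto simp: in_hahn_iff neq_hzero_iff)
  obtain m where m: "a m \<noteq> 0" "\<And>g. a g \<noteq> 0 \<Longrightarrow> m \<le> g"
    using well_ordered_setE[OF wo order_refl ne] by (metis mem_Collect_eq)
  have "hval a = m"
  proof (rule hval_eqI)
    show "\<And>h. h < m \<Longrightarrow> a h = 0" using m(2) by (meson not_le)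
  qed (fact m(1))
  then show "a (hval a) \<noteq> 0" "a g \<noteq> 0 \<Longrightarrow> hval a \<le> g" using m by auto
qed

lemma coeff_less_hval: "a \<in> hahn \<Longrightarrow> g < hval a \<Longrightarrow> a g = 0"
  using hval_le[of a g] by (cases "a = hzero") (auto simp: not_le[symmetric])

lemma hval_hconst: "c \<noteq> 0 \<Longrightarrow> hval (hconst c) = 0"
  by (rule hval_eqI) (auto simp: hconst_def)

lemma hval_scale:
  "(c::'k::field) \<noteq> 0 \<Longrightarrow> hval (\<lambda>g. c * a g) = hval (a :: 'g::linordered_ab_group_add \<Rightarrow> 'k)"
  unfolding hval_def by simp

lemma hval_uminus: "hval (\<lambda>g. - a g) = hval a"
  unfolding hval_def by simp

lemma vgt_iff_hval_less: "a \<noteq> hzero \<Longrightarrow> b \<noteq> hzero \<Longrightarrow> vgt a b \<longleftrightarrow> hval b < hval a"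
  unfolding vgt_def by simp

lemma vgt_iff_coeffs_vanish:
  assumes "a \<in> hahn" "b \<in> hahn" "b \<noteq> hzero"
  shows "vgt a b \<longleftrightarrow> (\<forall>g \<le> hval b. a g = 0)"
proof (cases "a = hzero")
  case False
  then show ?thesis
    using assms hval_coeff_neq_0[of a] coeff_less_hval[of a]
    by (auto simp: vgt_def)
qed (use assms in \<open>simp add: vgt_def\<close>)

lemma vgt_trans: "vgt a b \<Longrightarrow> vgt b c \<Longrightarrow> vgt a c"
  unfolding vgt_def by auto

lemma vgt_irrefl: "\<not> vgt a a"
  unfolding vgt_def by auto

lemma vgt_imp_neq_hzero: "vgt a b \<Longrightarrow> b \<noteq> hzero"
  unfolding vgt_def by auto

lemma vgt_hzero: "b \<noteq> hzero \<Longrightarrow> vgt hzero b"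
  unfolding vgt_def by auto

lemma vgt_hval_cong: "vgt a b \<Longrightarrow> b' \<noteq> hzero \<Longrightarrow> hval b' = hval b \<Longrightarrow> vgt a b'"
  unfolding vgt_def by auto

lemma vgt_hadd:
  assumes "a \<in> hahn" "b \<in> hahn" "c \<in> hahn" "vgt a c" "vgt b c"
  shows "vgt (hadd a b) c"
  using assms hadd_in_hahn[OF assms(1,2)]
    vgt_iff_coeffs_vanish[OF _ assms(3) vgt_imp_neq_hzero[OF assms(4)]]
  by simp

lemma vgt_hminus:
  assumes "a \<in> hahn" "b \<in> hahn" "c \<in> hahn" "vgt a c" "vgt b c"
  shows "vgt (hminus a b) c"
  using assms hminus_in_hahn[OF assms(1,2)]
    vgt_iff_coeffs_vanish[OF _ assms(3) vgt_imp_neq_hzero[OF assms(4)]]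
  by simp

lemma hval_hadd_vgt:
  assumes "a \<in> hahn" "b \<in> hahn" "vgt b a"
  shows "hval (hadd a b) = hval a"
proof -
  have a: "a \<noteq> hzero" using assms(3) by (rule vgt_imp_neq_hzero)
  have b: "\<forall>g \<le> hval a. b g = 0" using vgt_iff_coeffs_vanish[OF assms(2,1) a] assms(3) by simp
  have "hadd a b (hval a) \<noteq> 0" using b hval_coeff_neq_0[OF assms(1) a] by simp
  moreover have "\<And>h. h < hval a \<Longrightarrow> hadd a b h = 0" using b coeff_less_hval[OF assms(1)] by simp
  ultimately show ?thesis by (rule hval_eqI)
qed

lemma hval_hminus_vgt:
  assumes "a \<in> hahn" "b \<in> hahn" "vgt b a"
  shows "hval (hminus a b) = hval a"
proof -
  have a: "a \<noteq> hzero" using assms(3) by (rule vgt_imp_neq_hzero)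
  have b: "\<forall>g \<le> hval a. b g = 0" using vgt_iff_coeffs_vanish[OF assms(2,1) a] assms(3) by simp
  have "hminus a b (hval a) \<noteq> 0" using b hval_coeff_neq_0[OF assms(1) a] by simp
  moreover have "\<And>h. h < hval a \<Longrightarrow> hminus a b h = 0" using b coeff_less_hval[OF assms(1)] by simp
  ultimately show ?thesis by (rule hval_eqI)
qed

lemma hmul_eq_sum:
  assumes "finite F" "{h. a h \<noteq> 0 \<and> b (g - h) \<noteq> 0} \<subseteq> F"
  shows "hmul a b g = (\<Sum>h\<in>F. a h * b (g - h))"
  unfolding hmul_def by (rule sum.mono_neutral_left[OF assms]) auto

lemma finite_hmul_terms:
  assumes "a \<in> hahn" "b \<in> hahn"
  shows "finite {h. a h \<noteq> 0 \<and> b (g - h) \<noteq> 0}"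
  using well_ordered_finite_fibre[of "{x. a x \<noteq> 0}" "{x. b x \<noteq> 0}" g] assms
  by (simp add: in_hahn_iff)

lemma hmul_in_hahn:
  assumes "a \<in> hahn" "b \<in> hahn"
  shows "hmul a b \<in> hahn"
proof -
  have "{g. hmul a b g \<noteq> 0} \<subseteq> {x + y | x y. x \<in> {x. a x \<noteq> 0} \<and> y \<in> {x. b x \<noteq> 0}}"
  proof
    fix g assume "g \<in> {g. hmul a b g \<noteq> 0}"
    then have "{h. a h \<noteq> 0 \<and> b (g - h) \<noteq> 0} \<noteq> {}" unfolding hmul_def by force
    then obtain h where "a h \<noteq> 0" "b (g - h) \<noteq> 0" by blast
    then show "g \<in> {x + y | x y. x \<in> {x. a x \<noteq> 0} \<and> y \<in> {x. b x \<noteq> 0}}"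
      by (intro CollectI exI[of _ h] exI[of _ "g - h"]) auto
  qed
  then show ?thesis
    using well_ordered_sumset assms well_ordered_subset unfolding in_hahn_iff by blast
qed

lemma hmul_hzero_left [simp]: "hmul hzero b = hzero"
  unfolding hmul_def hzero_def by simp

lemma hmul_hzero_right: "hmul a hzero = hzero"
  unfolding hmul_def hzero_def by simp

lemma hmul_hadd_left:
  assumes "a \<in> hahn" "a' \<in> hahn" "b \<in> hahn"
  shows "hmul (hadd a a') b = hadd (hmul a b) (hmul a' b)"
proof
  fix g
  define F where "F = {h. a h \<noteq> 0 \<and> b (g - h) \<noteq> 0} \<union> {h. a' h \<noteq> 0 \<and> b (g - h) \<noteq> 0}"
  have F: "finite F" unfolding F_def using finite_hmul_terms assms by blast
  have "hmul (hadd a a') b g = (\<Sum>h\<in>F. hadd a a' h * b (g - h))"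
    by (rule hmul_eq_sum[OF F]) (auto simp: F_def)
  also have "\<dots> = (\<Sum>h\<in>F. a h * b (g - h)) + (\<Sum>h\<in>F. a' h * b (g - h))"
    by (simp add: distrib_right sum.distrib)
  also have "\<dots> = hmul a b g + hmul a' b g"
    by (subst (1 2) hmul_eq_sum[OF F]) (auto simp: F_def)
  finally show "hmul (hadd a a') b g = hadd (hmul a b) (hmul a' b) g" by simp
qed

lemma hmul_hmonom: "hmul (hmonom \<gamma> c) b = (\<lambda>g. c * b (g - \<gamma>))"
proof
  fix g
  have "hmul (hmonom \<gamma> c) b g = (\<Sum>h\<in>{\<gamma>}. hmonom \<gamma> c h * b (g - h))"
    by (rule hmul_eq_sum) (auto simp: hmonom_def)
  then show "hmul (hmonom \<gamma> c) b g = c * b (g - \<gamma>)" by (simp add: hmonom_def)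
qed

lemma hmul_hconst: "hmul (hconst c) b = (\<lambda>g. c * b g)"
  unfolding hconst_eq_hmonom hmul_hmonom by simp

lemma
  assumes "a \<in> hahn" "b \<in> hahn" "a \<noteq> hzero" "b \<noteq> hzero"
  shows hmul_neq_hzero: "hmul a b \<noteq> hzero" and hval_hmul: "hval (hmul a b) = hval a + hval b"
proof -
  let ?va = "hval a" and ?vb = "hval b"
  have a: "a ?va \<noteq> 0" "\<And>g. a g \<noteq> 0 \<Longrightarrow> ?va \<le> g" using hval_coeff_neq_0 hval_le assms by blast+
  have b: "b ?vb \<noteq> 0" "\<And>g. b g \<noteq> 0 \<Longrightarrow> ?vb \<le> g" using hval_coeff_neq_0 hval_le assms by blast+
  have "{h. a h \<noteq> 0 \<and> b (?va + ?vb - h) \<noteq> 0} \<subseteq> {?va}"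
  proof
    fix h assume "h \<in> {h. a h \<noteq> 0 \<and> b (?va + ?vb - h) \<noteq> 0}"
    then have "?va \<le> h" "?vb \<le> ?va + ?vb - h" using a b by auto
    then show "h \<in> {?va}" by (simp add: le_diff_eq add.commute)
  qed
  then have "hmul a b (?va + ?vb) = a ?va * b ?vb"
    using hmul_eq_sum[of "{?va}" a b] by simp
  then have lead: "hmul a b (?va + ?vb) \<noteq> 0" using a b by simp
  have below: "hmul a b g = 0" if "g < ?va + ?vb" for g
  proof -
    have "{h. a h \<noteq> 0 \<and> b (g - h) \<noteq> 0} = {}"
    proof (rule ccontr)
      assume "{h. a h \<noteq> 0 \<and> b (g - h) \<noteq> 0} \<noteq> {}"
      then obtain h where "?va \<le> h" "?vb \<le> g - h" using a b by blast
      then have "?va + ?vb \<le> g" by (metis add_mono add.commute diff_add_cancel)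
      then show False using that by simp
    qed
    then show ?thesis using hmul_eq_sum[of "{}" a b g] by simp
  qed
  show "hmul a b \<noteq> hzero" using lead neq_hzero_iff by blast
  show "hval (hmul a b) = ?va + ?vb" using lead below by (rule hval_eqI)
qed

lemma vgt_hminus_leading_quotient:
  assumes e: "e \<in> hahn" "e \<noteq> hzero" and b: "b \<in> hahn" "b \<noteq> hzero"
  shows "vgt (hminus e (hmul (hmonom (hval e - hval b) (e (hval e) / b (hval b))) b)) e"
proof -
  define q where "q = hmonom (hval e - hval b) (e (hval e) / b (hval b))"
  have eb: "e (hval e) \<noteq> 0" "b (hval b) \<noteq> 0" using hval_coeff_neq_0 e b by blast+
  have "hminus e (hmul q b) g = 0" if "g \<le> hval e" for g
  proof (cases "g = hval e")
    case False
    then have "g < hval e" "g - (hval e - hval b) < hval b" using that by (auto simp: algebra_simps)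
    then have "e g = 0" "b (g - (hval e - hval b)) = 0" using coeff_less_hval e(1) b(1) by blast+
    then show ?thesis by (simp add: q_def hmul_hmonom)
  qed (use eb in \<open>simp add: q_def hmul_hmonom\<close>)
  moreover have "hminus e (hmul q b) \<in> hahn"
    using hminus_in_hahn[OF e(1) hmul_in_hahn[OF hmonom_in_hahn b(1)]] by (simp add: q_def)
  ultimately show ?thesis using vgt_iff_coeffs_vanish e unfolding q_def by blast
qed

lemma hahn_glue:
  fixes \<rho> :: "('g::linordered_ab_group_add \<Rightarrow> 'k::field) \<Rightarrow> 'g"
  assumes C: "C \<subseteq> hahn"
    and coherent: "\<And>z w g. z \<in> C \<Longrightarrow> w \<in> C \<Longrightarrow> g < \<rho> z \<Longrightarrow> g < \<rho> w \<Longrightarrow> z g = w g"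
  obtains s where "s \<in> hahn" "\<And>z g. z \<in> C \<Longrightarrow> g < \<rho> z \<Longrightarrow> s g = z g"
    "\<And>g. s g \<noteq> 0 \<Longrightarrow> \<exists>z\<in>C. s g = z g"
proof -
  define s where "s g = (if \<exists>z\<in>C. g < \<rho> z then (SOME z. z \<in> C \<and> g < \<rho> z) g else 0)" for g
  have agree: "s g = z g" if "z \<in> C" "g < \<rho> z" for z g
  proof -
    define z' where "z' = (SOME z. z \<in> C \<and> g < \<rho> z)"
    have "z' \<in> C" "g < \<rho> z'" using someI_ex[of "\<lambda>z. z \<in> C \<and> g < \<rho> z"] that by (auto simp: z'_def)
    moreover have "s g = z' g" using that by (auto simp: s_def z'_def)
    ultimately show ?thesis using coherent[OF that(1) \<open>z' \<in> C\<close> that(2) \<open>g < \<rho> z'\<close>] by simp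
  qed
  have support: "\<exists>z\<in>C. g < \<rho> z" if "s g \<noteq> 0" for g
    using that by (auto simp: s_def split: if_splits)
  have support_agree: "\<exists>z\<in>C. s g = z g" if "s g \<noteq> 0" for g
    using support[OF that] agree by blast
  have "s \<in> hahn"
    unfolding in_hahn_iff well_ordered_set_def
  proof (intro allI impI)
    fix B assume B: "B \<subseteq> {g. s g \<noteq> 0}" "B \<noteq> {}"
    then obtain x where x: "x \<in> B" by blast
    then obtain z where z: "z \<in> C" "x < \<rho> z" using support B(1) by auto
    define B' where "B' = {y \<in> B. y < \<rho> z}"
    have wo: "well_ordered_set {g. z g \<noteq> 0}" using z C in_hahn_iff by blast
    have "B' \<subseteq> {g. z g \<noteq> 0}" using B agree z by (auto simp: B'_def)
    moreover have "B' \<noteq> {}" using x z by (auto simp: B'_def)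
    ultimately obtain m where m: "m \<in> B'" "\<And>y. y \<in> B' \<Longrightarrow> m \<le> y"
      using well_ordered_setE[OF wo] by metis
    have "m \<le> y" if "y \<in> B" for y
    proof (cases "y < \<rho> z")
      case False
      have "m < \<rho> z" using m(1) by (simp add: B'_def)
      with False show ?thesis by simp
    qed (use m that in \<open>simp add: B'_def\<close>)
    then show "\<exists>m\<in>B. \<forall>x\<in>B. m \<le> x" using m(1) by (auto simp: B'_def)
  qed
  then show ?thesis using that agree support_agree by blast
qed

locale successive_approximation =
  fixes T :: "('g::linordered_ab_group_add \<Rightarrow> 'k::field) set"
    and L :: "('g \<Rightarrow> 'k) \<Rightarrow> ('g \<Rightarrow> 'k)"
  assumes subset_hahn: "T \<subseteq> hahn"
    and hadd_closed: "x \<in> T \<Longrightarrow> y \<in> T \<Longrightarrow> hadd x y \<in> T"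
    and hminus_closed: "x \<in> T \<Longrightarrow> y \<in> T \<Longrightarrow> hminus x y \<in> T"
    and coeffwise_closed: "f \<in> hahn \<Longrightarrow> (\<And>g. f g \<noteq> 0 \<Longrightarrow> \<exists>z\<in>T. f g = z g) \<Longrightarrow> f \<in> T"
    and L_in_hahn: "x \<in> T \<Longrightarrow> L x \<in> hahn"
    and L_hadd: "x \<in> T \<Longrightarrow> y \<in> T \<Longrightarrow> L (hadd x y) = hadd (L x) (L y)"
    and L_vgt: "x \<in> T \<Longrightarrow> y \<in> T \<Longrightarrow> vgt y x \<Longrightarrow> vgt (L y) (L x)"
    and L_hval_mono: "x \<in> T \<Longrightarrow> y \<in> T \<Longrightarrow> x \<noteq> hzero \<Longrightarrow> y \<noteq> hzero \<Longrightarrow>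
      hval x \<le> hval y \<Longrightarrow> hval (L x) \<le> hval (L y)"
begin

abbreviation residual :: "('g \<Rightarrow> 'k) \<Rightarrow> ('g \<Rightarrow> 'k) \<Rightarrow> ('g \<Rightarrow> 'k)" where
  "residual b z \<equiv> hminus b (L z)"

lemma L_hminus: "x \<in> T \<Longrightarrow> y \<in> T \<Longrightarrow> L (hminus x y) = hminus (L x) (L y)"
proof -
  assume xy: "x \<in> T" "y \<in> T"
  have "hadd (hminus x y) y = x" by (rule ext) simp
  then have "L x = hadd (L (hminus x y)) (L y)" using L_hadd[OF hminus_closed[OF xy] xy(2)] by simp
  then show ?thesis by (simp add: fun_eq_iff eq_diff_eq)
qed

lemma hzero_in_T: "hzero \<in> T"
  by (rule coeffwise_closed) simp_all

lemma L_neq_hzero: "x \<in> T \<Longrightarrow> x \<noteq> hzero \<Longrightarrow> L x \<noteq> hzero"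
  using L_vgt[OF _ hzero_in_T vgt_hzero] vgt_imp_neq_hzero by blast

lemma hval_eq_if_hval_L_eq:
  assumes "x \<in> T" "y \<in> T" "x \<noteq> hzero" "y \<noteq> hzero" "hval (L x) = hval (L y)"
  shows "hval x = hval y"
proof -
  have "\<not> hval u < hval v"
    if "u \<in> T" "v \<in> T" "u \<noteq> hzero" "v \<noteq> hzero" "hval (L u) = hval (L v)" for u v
    using L_vgt[OF that(1,2)] L_neq_hzero that by (auto simp: vgt_iff_hval_less)
  then show ?thesis using assms by (metis linorder_neqE)
qed

definition improvement_order :: "('g \<Rightarrow> 'k) \<Rightarrow> (('g \<Rightarrow> 'k) \<times> ('g \<Rightarrow> 'k)) set" where
  "improvement_order b = {(x, y). x \<in> T \<and> y \<in> T \<and> (x = y \<or> vgt (residual b y) (residual b x))}"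

lemma Field_improvement_order: "Field (improvement_order b) = T"
  unfolding improvement_order_def Field_def by auto

lemma partial_order_improvement_order: "Partial_order (improvement_order b)"
  unfolding partial_order_on_def preorder_on_def Field_improvement_order
  unfolding improvement_order_def refl_on_def trans_def antisym_def
  using vgt_trans vgt_irrefl by blast

context
  fixes b :: "'g \<Rightarrow> 'k"
  assumes b: "b \<in> hahn"
begin

lemma residual_in_hahn: "z \<in> T \<Longrightarrow> residual b z \<in> hahn"
  by (simp add: b hminus_in_hahn L_in_hahn)

lemma L_hminus_residual: "z \<in> T \<Longrightarrow> w \<in> T \<Longrightarrow> L (hminus w z) = hminus (residual b z) (residual b w)"
  by (simp add: L_hminus fun_eq_iff)

lemma hval_L_improvement:
  assumes "z \<in> T" "w \<in> T" "vgt (residual b w) (residual b z)"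
  shows "hminus w z \<noteq> hzero" "hval (L (hminus w z)) = hval (residual b z)"
proof -
  show "hval (L (hminus w z)) = hval (residual b z)"
    using hval_hminus_vgt[OF residual_in_hahn residual_in_hahn assms(3)] assms(1,2) b
    by (simp add: L_hminus_residual)
  show "hminus w z \<noteq> hzero"
  proof
    assume "hminus w z = hzero"
    then have "w = z" by (simp add: fun_eq_iff neq_hzero_iff)
    then show False using assms(3) vgt_irrefl by blast
  qed
qed

lemma hval_improvement_unique:
  assumes "z \<in> T" "w \<in> T" "w' \<in> T"
    and "vgt (residual b w) (residual b z)" "vgt (residual b w') (residual b z)"
  shows "hval (hminus w z) = hval (hminus w' z)"
  using hval_eq_if_hval_L_eq hval_L_improvement assms hminus_closed by metis

lemma hval_improvement_increasing:
  assumes "z \<in> T" "w \<in> T" "w' \<in> T"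
    and zw: "vgt (residual b w) (residual b z)" and ww': "vgt (residual b w') (residual b w)"
  shows "hval (hminus w z) < hval (hminus w' w)"
proof (rule ccontr)
  assume "\<not> ?thesis"
  then have "hval (L (hminus w' w)) \<le> hval (L (hminus w z))"
    using L_hval_mono hval_L_improvement(1) assms hminus_closed by (simp add: not_less)
  then have "hval (residual b w) \<le> hval (residual b z)"
    using hval_L_improvement(2) assms by simp
  moreover have "residual b w \<noteq> hzero" using ww' by (rule vgt_imp_neq_hzero)
  ultimately show False using zw by (auto simp: vgt_def)
qed

lemma vgt_residual_if_agrees:
  assumes "z \<in> T" "w \<in> T" "s \<in> T" and zw: "vgt (residual b w) (residual b z)"
    and agree: "\<And>g. g \<le> hval (hminus w z) \<Longrightarrow> s g = w g"
  shows "vgt (residual b s) (residual b z)"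
proof -
  have T: "hminus s w \<in> T" "hminus w z \<in> T" using assms hminus_closed by blast+
  have "vgt (hminus s w) (hminus w z)"
    using vgt_iff_coeffs_vanish[of "hminus s w" "hminus w z"] T subset_hahn
      hval_L_improvement(1)[OF assms(1,2) zw] agree by auto
  then have "vgt (L (hminus s w)) (L (hminus w z))" using L_vgt T by blast
  then have "vgt (L (hminus s w)) (residual b z)"
    using vgt_hval_cong hval_L_improvement(2)[OF assms(1,2) zw] zw vgt_imp_neq_hzero by metis
  moreover have "residual b s = hminus (residual b w) (L (hminus s w))"
    using assms(2,3) by (simp add: L_hminus fun_eq_iff)
  ultimately show ?thesis
    using vgt_hminus residual_in_hahn L_in_hahn T b assms(1,2) zw by metis
qed

text \<open>Along a chain of ever better approximations the gaps \<open>hval (w - z)\<close> increase, so its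
  members agree below them and glue to a pseudo-limit that beats every member.\<close>
lemma chain_upper_bound:
  assumes C: "C \<subseteq> T"
    and comparable: "\<And>z w. z \<in> C \<Longrightarrow> w \<in> C \<Longrightarrow>
      z = w \<or> vgt (residual b w) (residual b z) \<or> vgt (residual b z) (residual b w)"
    and unbounded: "\<And>z. z \<in> C \<Longrightarrow> \<exists>w\<in>C. vgt (residual b w) (residual b z)"
  obtains s where "s \<in> T" "\<And>z. z \<in> C \<Longrightarrow> vgt (residual b s) (residual b z)"
proof -
  define succ where "succ z = (SOME w. w \<in> C \<and> vgt (residual b w) (residual b z))" for z
  have succ: "succ z \<in> C" "vgt (residual b (succ z)) (residual b z)" if "z \<in> C" for z
    using someI_ex[OF unbounded[OF that, unfolded Bex_def]] unfolding succ_def by blast+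
  define \<rho> where "\<rho> z = hval (hminus (succ z) z)" for z
  have \<rho>_eq: "hval (hminus w z) = \<rho> z"
    if "z \<in> C" "w \<in> C" "vgt (residual b w) (residual b z)" for z w
    using hval_improvement_unique[of z w "succ z"] that succ C unfolding \<rho>_def by blast
  have \<rho>_less: "\<rho> z < \<rho> w" if "z \<in> C" "w \<in> C" "vgt (residual b w) (residual b z)" for z w
  proof -
    have "hval (hminus w z) < hval (hminus (succ w) w)"
      using hval_improvement_increasing[of z w "succ w"] that succ[OF that(2)] C by blast
    then show ?thesis using \<rho>_eq[OF that] unfolding \<rho>_def by simp
  qed
  have agree_below: "w g = z g"
    if "z \<in> C" "w \<in> C" "vgt (residual b w) (residual b z)" "g < \<rho> z" for z w g
  proof -
    have "hminus w z \<in> hahn" using that C hminus_closed subset_hahn by blast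
    moreover have "g < hval (hminus w z)" using \<rho>_eq[OF that(1-3)] that(4) by simp
    ultimately show ?thesis using coeff_less_hval by fastforce
  qed
  have coherent: "z g = w g" if "z \<in> C" "w \<in> C" "g < \<rho> z" "g < \<rho> w" for z w g
    using comparable[OF that(1,2)] agree_below that by metis
  obtain s where s: "s \<in> hahn" "\<And>z g. z \<in> C \<Longrightarrow> g < \<rho> z \<Longrightarrow> s g = z g"
    and s_coeffs: "\<And>g. s g \<noteq> 0 \<Longrightarrow> \<exists>z\<in>C. s g = z g"
    using hahn_glue[of C \<rho>] coherent C subset_hahn by blast
  have "s \<in> T" using coeffwise_closed[OF s(1)] s_coeffs C by blast
  moreover have "vgt (residual b s) (residual b z)" if "z \<in> C" for z
  proof (rule vgt_residual_if_agrees)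
    fix g assume "g \<le> hval (hminus (succ z) z)"
    then have "g < \<rho> (succ z)" using \<rho>_less[OF that succ[OF that]] unfolding \<rho>_def by simp
    then show "s g = succ z g" using s(2) succ that by blast
  qed (use that succ C \<open>s \<in> T\<close> in auto)
  ultimately show ?thesis using that by blast
qed

lemma improvement_order_chain_bounded:
  assumes "C \<in> Chains (improvement_order b)"
  shows "\<exists>u\<in>T. \<forall>z\<in>C. (z, u) \<in> improvement_order b"
proof -
  have C: "C \<subseteq> T" using assms unfolding Chains_def improvement_order_def by fast
  have comparable: "z = w \<or> vgt (residual b w) (residual b z) \<or> vgt (residual b z) (residual b w)"
    if "z \<in> C" "w \<in> C" for z w
    using assms that unfolding Chains_def improvement_order_def by fast
  show ?thesis
  proof (cases "\<exists>u\<in>C. \<forall>z\<in>C. (z, u) \<in> improvement_order b")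
    case True
    then show ?thesis using C by blast
  next
    case False
    then have "\<exists>w\<in>C. vgt (residual b w) (residual b z)" if "z \<in> C" for z
      using comparable that C unfolding improvement_order_def by blast
    then obtain s where "s \<in> T" "\<And>z. z \<in> C \<Longrightarrow> vgt (residual b s) (residual b z)"
      using chain_upper_bound[OF C comparable] by blast
    then show ?thesis using C unfolding improvement_order_def by blast
  qed
qed

lemma solvable:
  assumes improvable: "\<And>z. z \<in> T \<Longrightarrow> residual b z \<noteq> hzero \<Longrightarrow>
    \<exists>d\<in>T. vgt (hminus (residual b z) (L d)) (residual b z)"
  shows "\<exists>z\<in>T. L z = b"
proof -
  obtain m where m: "m \<in> T" "\<And>z. z \<in> T \<Longrightarrow> (m, z) \<in> improvement_order b \<Longrightarrow> z = m"
    using Zorns_po_lemma[OF partial_order_improvement_order] improvement_order_chain_bounded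
    by (metis Field_improvement_order)
  have "residual b m = hzero"
  proof (rule ccontr)
    assume "residual b m \<noteq> hzero"
    then obtain d where d: "d \<in> T" "vgt (hminus (residual b m) (L d)) (residual b m)"
      using improvable[OF m(1)] by blast
    have "residual b (hadd m d) = hminus (residual b m) (L d)"
      using L_hadd[OF m(1) d(1)] by (simp add: fun_eq_iff)
    then have "(m, hadd m d) \<in> improvement_order b"
      using m(1) d hadd_closed unfolding improvement_order_def by simp
    then have "hadd m d = m" using m hadd_closed d(1) by blast
    then show False using d(2) \<open>residual b (hadd m d) = _\<close> vgt_irrefl by metis
  qed
  then show ?thesis using m(1) by (auto simp: fun_eq_iff)
qed

end

end

lemma hmul_right_successive_approximation:
  assumes "b \<in> hahn" "b \<noteq> hzero"
  shows "successive_approximation hahn (\<lambda>a. hmul a b)"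
proof
  show "hmul (hadd x y) b = hadd (hmul x b) (hmul y b)" if "x \<in> hahn" "y \<in> hahn" for x y
    using hmul_hadd_left that assms by blast
  show "vgt (hmul y b) (hmul x b)" if "x \<in> hahn" "y \<in> hahn" "vgt y x" for x y
  proof (cases "y = hzero")
    case False
    have "x \<noteq> hzero" using that(3) by (rule vgt_imp_neq_hzero)
    then show ?thesis
      using that False assms by (simp add: vgt_iff_hval_less hmul_neq_hzero hval_hmul)
  qed (use that assms in \<open>simp add: vgt_hzero hmul_neq_hzero vgt_imp_neq_hzero\<close>)
  show "hval (hmul x b) \<le> hval (hmul y b)"
    if "x \<in> hahn" "y \<in> hahn" "x \<noteq> hzero" "y \<noteq> hzero" "hval x \<le> hval y" for x y
    using that assms by (simp add: hval_hmul)
qed (use assms in \<open>auto simp: hadd_in_hahn hminus_in_hahn hmul_in_hahn\<close>)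

lemma hdiv_unique:
  assumes "a \<in> hahn" "b \<in> hahn" "b \<noteq> hzero"
  shows "\<exists>!q. q \<in> hahn \<and> hmul q b = a"
proof -
  interpret successive_approximation hahn "\<lambda>q. hmul q b"
    using assms(2,3) by (rule hmul_right_successive_approximation)
  have "\<exists>q\<in>hahn. hmul q b = a"
  proof (rule solvable[OF assms(1)])
    fix q assume "q \<in> hahn" "hminus a (hmul q b) \<noteq> hzero"
    then show "\<exists>d\<in>hahn. vgt (hminus (hminus a (hmul q b)) (hmul d b)) (hminus a (hmul q b))"
      using vgt_hminus_leading_quotient assms hmonom_in_hahn residual_in_hahn[OF assms(1)] by blast
  qed
  moreover have "q = q'" if "q \<in> hahn" "q' \<in> hahn" "hmul q b = hmul q' b" for q q'
  proof (rule ccontr)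
    assume "q \<noteq> q'"
    then have "hminus q q' \<noteq> hzero" by (simp add: neq_hzero_iff fun_eq_iff)
    then have "hmul (hminus q q') b \<noteq> hzero" using L_neq_hzero hminus_in_hahn that(1,2) by blast
    moreover have "hmul (hminus q q') b = hzero" using L_hminus[OF that(1,2)] that(3)
      by (simp add: fun_eq_iff)
    ultimately show False by contradiction
  qed
  ultimately show ?thesis by blast
qed

lemma
  assumes "a \<in> hahn" "b \<in> hahn" "b \<noteq> hzero"
  shows hdiv_in_hahn: "hdiv a b \<in> hahn" and hmul_hdiv: "hmul (hdiv a b) b = a"
  using theI'[OF hdiv_unique[OF assms]] unfolding hdiv_def by auto

definition hahn_no_const :: "('g::linordered_ab_group_add \<Rightarrow> 'k::field) set" where
  "hahn_no_const = {a \<in> hahn. a 0 = 0}"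

lemma hval_neq_0_if_no_const: "a \<in> hahn_no_const \<Longrightarrow> a \<noteq> hzero \<Longrightarrow> hval a \<noteq> 0"
  unfolding hahn_no_const_def using hval_coeff_neq_0[of a] by auto

locale differential_hahn_field =
  fixes D :: "('g::linordered_ab_group_add \<Rightarrow> 'k::field) \<Rightarrow> ('g \<Rightarrow> 'k)"
  assumes derivation: "is_derivation D"
    and constants_eq: "constants D = range hconst"
    and differential_valuation: "differential_valuation D"
begin

lemma D_in_hahn: "a \<in> hahn \<Longrightarrow> D a \<in> hahn"
  using derivation unfolding is_derivation_def by blast

lemma D_hadd: "a \<in> hahn \<Longrightarrow> b \<in> hahn \<Longrightarrow> D (hadd a b) = hadd (D a) (D b)"
  using derivation unfolding is_derivation_def by blast

lemma D_hmul: "a \<in> hahn \<Longrightarrow> b \<in> hahn \<Longrightarrow> D (hmul a b) = hadd (hmul a (D b)) (hmul b (D a))"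
  using derivation unfolding is_derivation_def by blast

lemma D_hconst [simp]: "D (hconst c) = hzero"
proof -
  have "hconst c \<in> constants D" using constants_eq by simp
  then show ?thesis by (simp add: constants_def)
qed

lemma D_hzero [simp]: "D hzero = hzero"
  using D_hconst[of 0] by (simp add: hconst_0)

lemma D_hminus: "a \<in> hahn \<Longrightarrow> b \<in> hahn \<Longrightarrow> D (hminus a b) = hminus (D a) (D b)"
proof -
  assume ab: "a \<in> hahn" "b \<in> hahn"
  have "hadd (hminus a b) b = a" by (rule ext) simp
  then have "D a = hadd (D (hminus a b)) (D b)" using D_hadd[OF hminus_in_hahn[OF ab] ab(2)] by simp
  then show ?thesis by (simp add: fun_eq_iff eq_diff_eq)
qed

lemma D_hmul_hconst: "a \<in> hahn \<Longrightarrow> D (hmul (hconst c) a) = hmul (hconst c) (D a)"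
  using D_hmul[OF hconst_in_hahn] by (simp add: hmul_hconst hmul_hzero_right fun_eq_iff)

lemma D_neq_hzero:
  assumes "a \<in> hahn" "a \<noteq> hzero" "hval a \<noteq> 0"
  shows "D a \<noteq> hzero"
proof
  assume "D a = hzero"
  then have "a \<in> range hconst" using assms(1) constants_eq by (auto simp: constants_def)
  then obtain c where "a = hconst c" by blast
  moreover have "c \<noteq> 0" using assms(2) calculation hconst_0 by blast
  ultimately show False using assms(3) hval_hconst by blast
qed

lemma vgt_hmul_D:
  assumes "a \<in> hahn" "vnonneg a" and b: "b \<in> hahn" "b \<noteq> hzero" "0 < hval b"
  shows "vgt (hmul b (D a)) (D b)"
proof -
  have Db: "D b \<in> hahn" "D b \<noteq> hzero" using b D_in_hahn D_neq_hzero by auto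
  define q where "q = hdiv (hmul b (D a)) (D b)"
  have "hmul b (D a) \<in> hahn" using hmul_in_hahn[OF b(1) D_in_hahn[OF assms(1)]] .
  then have q: "q \<in> hahn" "hmul q (D b) = hmul b (D a)"
    unfolding q_def using hdiv_in_hahn hmul_hdiv Db by blast+
  have "vpos b" using b(3) by (simp add: vpos_def)
  then have "vpos q"
    using differential_valuation assms(1,2) b(1,2) unfolding differential_valuation_def q_def
    by blast
  show ?thesis
  proof (cases "q = hzero")
    case False
    then have "hval (D b) < hval q + hval (D b)" using \<open>vpos q\<close> by (simp add: vpos_def)
    moreover have "hmul q (D b) \<noteq> hzero" "hval (hmul q (D b)) = hval q + hval (D b)"
      using hmul_neq_hzero[OF q(1) Db(1) False Db(2)] hval_hmul[OF q(1) Db(1) False Db(2)] by blast+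
    ultimately show ?thesis using q(2) Db(2) by (simp add: vgt_iff_hval_less)
  next
    case True
    then have "hmul b (D a) = hzero" using q(2) by simp
    then show ?thesis using Db(2) by (simp add: vgt_hzero)
  qed
qed

text \<open>Apply the previous lemma to \<open>y = 1 / x\<close>, which has positive valuation, using \<open>D (x y) = 0\<close>.\<close>
lemma vgt_hmul_D_if_hval_neg:
  assumes x: "x \<in> hahn" "x \<noteq> hzero" "hval x < 0" and w: "w \<in> hahn" "w \<noteq> hzero" "0 < hval w"
  shows "vgt (hmul x (D w)) (D x)"
proof -
  have Dx: "D x \<in> hahn" "D x \<noteq> hzero" and Dw: "D w \<in> hahn" "D w \<noteq> hzero"
    using x w D_in_hahn D_neq_hzero by auto
  define y where "y = hdiv (hconst 1) x"
  have y: "y \<in> hahn" "hmul y x = hconst 1"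
    unfolding y_def using hdiv_in_hahn hmul_hdiv hconst_in_hahn x(1,2) by blast+
  have "hconst 1 \<noteq> (hzero :: 'g \<Rightarrow> 'k)" by (auto simp: hconst_def neq_hzero_iff)
  then have "y \<noteq> hzero" using y(2) by (metis hmul_hzero_left)
  have "hval (hconst 1 :: 'g \<Rightarrow> 'k) = 0" by (simp add: hval_hconst)
  then have "hval y + hval x = 0" using hval_hmul[OF y(1) x(1) \<open>y \<noteq> hzero\<close> x(2)] y(2) by simp
  then have "0 < hval y" using x(3) by (simp add: add_eq_0_iff)
  have Dy: "D y \<in> hahn" "D y \<noteq> hzero"
    using y \<open>y \<noteq> hzero\<close> \<open>0 < hval y\<close> D_in_hahn D_neq_hzero by auto
  have "hadd (hmul y (D x)) (hmul x (D y)) = hzero" using D_hmul[OF y(1) x(1)] y(2) by simp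
  then have "hmul y (D x) = (\<lambda>g. - hmul x (D y) g)" by (simp add: fun_eq_iff eq_neg_iff_add_eq_0)
  then have "hval (hmul y (D x)) = hval (hmul x (D y))" by (simp add: hval_uminus)
  then have Dx_Dy: "hval y + hval (D x) = hval x + hval (D y)"
    using hval_hmul[OF y(1) Dx(1) \<open>y \<noteq> hzero\<close> Dx(2)] hval_hmul[OF x(1) Dy(1) x(2) Dy(2)] by simp
  have "vnonneg w" using w(3) by (simp add: vnonneg_def less_imp_le)
  then have "vgt (hmul y (D w)) (D y)" using vgt_hmul_D w(1) y(1) \<open>y \<noteq> hzero\<close> \<open>0 < hval y\<close> by blast
  then have "hval (D y) < hval y + hval (D w)"
    using y(1) Dw \<open>y \<noteq> hzero\<close> Dy(2) by (simp add: vgt_iff_hval_less hmul_neq_hzero hval_hmul)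
  then have "hval y + hval (D x) < hval y + (hval x + hval (D w))"
    using Dx_Dy by (simp add: ac_simps)
  then have "hval (D x) < hval x + hval (D w)" by simp
  then show ?thesis
    using x(1,2) Dw Dx(2) by (simp add: vgt_iff_hval_less hmul_neq_hzero hval_hmul)
qed

lemma vgt_hmul_D_if_hval_pos:
  assumes x: "x \<in> hahn" "x \<noteq> hzero" "hval x \<noteq> 0" and w: "w \<in> hahn" "w \<noteq> hzero" "0 < hval w"
  shows "vgt (hmul x (D w)) (D x)"
proof (cases "0 < hval x")
  case True
  moreover have "vnonneg w" using w(3) by (simp add: vnonneg_def less_imp_le)
  ultimately show ?thesis using vgt_hmul_D w(1) x(1,2) by blast
next
  case False
  then show ?thesis using vgt_hmul_D_if_hval_neg x w by (simp add: not_less order.order_iff_strict)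
qed

lemma D_vgt:
  assumes x: "x \<in> hahn" "hval x \<noteq> 0" and y: "y \<in> hahn" "vgt y x"
  shows "vgt (D y) (D x)"
proof -
  have "x \<noteq> hzero" using y(2) by (rule vgt_imp_neq_hzero)
  then have Dx: "D x \<in> hahn" "D x \<noteq> hzero" using x D_in_hahn D_neq_hzero by auto
  show ?thesis
  proof (cases "y = hzero")
    case True
    then show ?thesis using Dx(2) by (simp add: vgt_hzero)
  next
    case False
    define w where "w = hdiv y x"
    have w: "w \<in> hahn" "hmul w x = y"
      unfolding w_def using hdiv_in_hahn[OF y(1) x(1)] hmul_hdiv[OF y(1) x(1)] \<open>x \<noteq> hzero\<close> by blast+
    have "w \<noteq> hzero" using w(2) False by auto
    have "hval y = hval w + hval x"
      using hval_hmul[OF w(1) x(1) \<open>w \<noteq> hzero\<close> \<open>x \<noteq> hzero\<close>] w(2) by simp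
    moreover have "hval x < hval y" using y(2) False \<open>x \<noteq> hzero\<close> by (simp add: vgt_iff_hval_less)
    ultimately have "0 < hval w" by simp
    have "vgt (hmul w (D x)) (D x)"
      using w(1) \<open>w \<noteq> hzero\<close> Dx \<open>0 < hval w\<close>
      by (simp add: vgt_iff_hval_less hmul_neq_hzero hval_hmul)
    moreover have "vgt (hmul x (D w)) (D x)"
      using vgt_hmul_D_if_hval_pos[OF x(1) \<open>x \<noteq> hzero\<close> x(2) w(1) \<open>w \<noteq> hzero\<close> \<open>0 < hval w\<close>] .
    ultimately have "vgt (hadd (hmul w (D x)) (hmul x (D w))) (D x)"
      using vgt_hadd[OF hmul_in_hahn[OF w(1) Dx(1)] hmul_in_hahn[OF x(1) D_in_hahn[OF w(1)]] Dx(1)]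
      by blast
    then show ?thesis using D_hmul[OF w(1) x(1)] w(2) by simp
  qed
qed

lemma hval_D_eq:
  assumes x: "x \<in> hahn" "x \<noteq> hzero" "hval x \<noteq> 0" and y: "y \<in> hahn" "y \<noteq> hzero" "hval y = hval x"
  shows "hval (D y) = hval (D x)"
proof -
  define c where "c = y (hval y) / x (hval x)"
  define r where "r = hminus y (hmul (hconst c) x)"
  have "c \<noteq> 0" using hval_coeff_neq_0[OF x(1,2)] hval_coeff_neq_0[OF y(1,2)] y(3)
    by (simp add: c_def)
  have r: "r \<in> hahn" unfolding r_def
    by (rule hminus_in_hahn[OF y(1) hmul_in_hahn[OF hconst_in_hahn x(1)]])
  have "vgt r y"
    using vgt_hminus_leading_quotient[OF y(1,2) x(1,2)] y(3)
    by (simp add: r_def c_def hconst_eq_hmonom)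
  then have "vgt r x" using vgt_hval_cong[OF _ x(2)] y(3) by simp
  then have "vgt (D r) (D x)" by (rule D_vgt[OF x(1,3) r])
  moreover have cDx: "hmul (hconst c) (D x) \<noteq> hzero" "hval (hmul (hconst c) (D x)) = hval (D x)"
    using D_neq_hzero x \<open>c \<noteq> 0\<close> by (auto simp: hmul_hconst hval_scale neq_hzero_iff)
  ultimately have "vgt (D r) (hmul (hconst c) (D x))" by (rule vgt_hval_cong)
  moreover have "y = hadd (hmul (hconst c) x) r" by (simp add: r_def fun_eq_iff)
  then have "D y = hadd (hmul (hconst c) (D x)) (D r)"
    using D_hadd[OF hmul_in_hahn[OF hconst_in_hahn x(1)] r] D_hmul_hconst[OF x(1)] by simp
  ultimately show ?thesis
    using hval_hadd_vgt[OF hmul_in_hahn[OF hconst_in_hahn D_in_hahn[OF x(1)]] D_in_hahn[OF r]]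
      cDx(2)
    by simp
qed

lemma D_hval_mono:
  assumes x: "x \<in> hahn" "x \<noteq> hzero" "hval x \<noteq> 0" and y: "y \<in> hahn" "y \<noteq> hzero" "hval y \<noteq> 0"
    and "hval x \<le> hval y"
  shows "hval (D x) \<le> hval (D y)"
proof (cases "hval x = hval y")
  case False
  then have "vgt y x" using assms by (simp add: vgt_iff_hval_less)
  then have "vgt (D y) (D x)" by (rule D_vgt[OF x(1,3) y(1)])
  then show ?thesis using D_neq_hzero y by (simp add: vgt_def less_imp_le)
qed (use hval_D_eq[OF x y(1,2)] in simp)

sublocale no_const: successive_approximation hahn_no_const D
proof
  show "f \<in> hahn_no_const" if "f \<in> hahn" "\<And>g. f g \<noteq> 0 \<Longrightarrow> \<exists>z\<in>hahn_no_const. f g = z g" for f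
    using that(1) that(2)[of 0] by (auto simp: hahn_no_const_def)
  show "vgt (D y) (D x)" if "x \<in> hahn_no_const" "y \<in> hahn_no_const" "vgt y x" for x y
  proof -
    have "hval x \<noteq> 0" using hval_neq_0_if_no_const[OF that(1) vgt_imp_neq_hzero[OF that(3)]] .
    then show ?thesis using D_vgt[of x y] that by (simp add: hahn_no_const_def)
  qed
  show "hval (D x) \<le> hval (D y)"
    if "x \<in> hahn_no_const" "y \<in> hahn_no_const" "x \<noteq> hzero" "y \<noteq> hzero" "hval x \<le> hval y" for x y
    using that D_hval_mono hval_neq_0_if_no_const by (auto simp: hahn_no_const_def)
qed (auto simp: hahn_no_const_def hadd_in_hahn hminus_in_hahn D_in_hahn D_hadd)

lemma inj_on_D: "inj_on D hahn_no_const"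
proof (rule inj_onI)
  fix s t assume s: "s \<in> hahn_no_const" and t: "t \<in> hahn_no_const" and "D s = D t"
  have st: "s \<in> hahn" "t \<in> hahn" using s t by (simp_all add: hahn_no_const_def)
  have "hminus s t \<in> constants D"
    using D_hminus[OF st] hminus_in_hahn[OF st] \<open>D s = D t\<close> by (simp add: constants_def fun_eq_iff)
  then obtain c where c: "hminus s t = hconst c" using constants_eq by auto
  moreover have "c = 0" using fun_cong[OF c, of 0] s t by (simp add: hahn_no_const_def hconst_def)
  ultimately show "s = t" by (simp add: fun_eq_iff hconst_def)
qed

lemma image_D_eq_hahn:
  assumes "asymptotic_integration D"
  shows "D ` hahn_no_const = hahn"
proof
  show "D ` hahn_no_const \<subseteq> hahn" using D_in_hahn by (auto simp: hahn_no_const_def)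
  show "hahn \<subseteq> D ` hahn_no_const"
  proof
    fix b :: "'g \<Rightarrow> 'k" assume b: "b \<in> hahn"
    have "\<exists>s\<in>hahn_no_const. D s = b"
    proof (rule no_const.solvable[OF b])
      fix z assume z: "z \<in> hahn_no_const" "hminus b (D z) \<noteq> hzero"
      then have "hminus b (D z) \<in> hahn" using hminus_in_hahn[OF b D_in_hahn]
        by (simp add: hahn_no_const_def)
      then obtain a where a: "a \<in> hahn" "vgt (hminus (hminus b (D z)) (D a)) (hminus b (D z))"
        using assms z(2) unfolding asymptotic_integration_def by blast
      define d where "d = hminus a (hconst (a 0))"
      have "d \<in> hahn_no_const"
        using hminus_in_hahn[OF a(1) hconst_in_hahn]
        by (simp add: d_def hahn_no_const_def hconst_def)
      moreover have "D d = D a" using D_hminus[OF a(1) hconst_in_hahn]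
        by (simp add: d_def fun_eq_iff)
      ultimately show "\<exists>d\<in>hahn_no_const. vgt (hminus (hminus b (D z)) (D d)) (hminus b (D z))"
        using a(2) by (intro bexI[of _ d]) simp_all
    qed
    then show "b \<in> D ` hahn_no_const" by blast
  qed
qed

end

theorem mainTheorem7:
  fixes D :: "('g::linordered_ab_group_add \<Rightarrow> 'k::field) \<Rightarrow> ('g \<Rightarrow> 'k)"
  assumes "is_derivation D"
    and "constants D = range hconst"
    and "differential_valuation D"
    and "asymptotic_integration D"
  shows "(\<forall>b\<in>hahn. \<exists>!s. s \<in> {a \<in> hahn. a 0 = 0} \<and> D s = b)
       \<and> bij_betw D {a \<in> hahn. a 0 = 0} hahn"
proof -
  interpret differential_hahn_field D
    using assms(1-3) by unfold_locales
  have bij: "bij_betw D hahn_no_const hahn"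
    using inj_on_D image_D_eq_hahn[OF assms(4)] by (simp add: bij_betw_def)
  have "\<exists>!s. s \<in> hahn_no_const \<and> D s = b" if "b \<in> hahn" for b
  proof -
    have "b \<in> D ` hahn_no_const" using that image_D_eq_hahn[OF assms(4)] by simp
    then obtain s where s: "s \<in> hahn_no_const" "D s = b" by blast
    show ?thesis by (rule ex1I[of _ s]) (use s inj_onD[OF inj_on_D] in auto)
  qed
  with bij show ?thesis by (simp add: hahn_no_const_def)
qed

end
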